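(* There is an absolute constant $C$ such that for all $R_1,R_2\ge1$ and all finitely supported non-negative measures $\mu,\nu$ on $[-1,1]^2$, $$\Big|\sum_{z,w}e^{i(R_1z_1w_1+R_2z_2w_2)}\mu(z)\nu(w)\Big|\le C(R_1R_2)^{\frac12}\Big(\sum_z\mu(z)\Big)^{\frac12}\Big(\sum_w\nu(w)\Big)^{\frac12}M_\mu^{\frac12}M_\nu^{\frac12},$$ where $M_\mu=\max_{\xi_1,\xi_2\in\mathbb{R}}\mu\big(B(\xi_1,\tfrac1{R_1})\times B(\xi_2,\tfrac1{R_2})\big)$ and similarly for $M_\nu$.
   Context: Here $z=(z_1,z_2)$, $w=(w_1,w_2)$ range over the supports of $\mu$ and $\nu$, $\mu(z)$ denotes the mass of $\mu$ at $z$, and $B(\xi,\rho)=[\xi-\rho,\xi+\rho]\subset\mathbb{R}$. *)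

theory Defs
  imports "HOL-Analysis.Analysis"
begin

text \<open>A finitely supported non-negative measure on the plane is represented by its mass
function mu :: real * real => real; its support is the set of points of nonzero mass.\<close>

definition fsupp :: "(real \<times> real \<Rightarrow> real) \<Rightarrow> (real \<times> real) set" where
  "fsupp mu = {z. mu z \<noteq> 0}"

definition fs_measure_on_square :: "(real \<times> real \<Rightarrow> real) \<Rightarrow> bool" where
  "fs_measure_on_square mu \<longleftrightarrow> finite (fsupp mu) \<and> (\<forall>z. mu z \<ge> 0) \<and>
     fsupp mu \<subseteq> {-1..1} \<times> {-1..1}"

definition mass :: "(real \<times> real \<Rightarrow> real) \<Rightarrow> (real \<times> real) set \<Rightarrow> real" where
  "mass mu A = (\<Sum>z\<in>fsupp mu \<inter> A. mu z)"

definition Bint :: "real \<Rightarrow> real \<Rightarrow> real set" where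
  "Bint xi rho = {xi - rho .. xi + rho}"

definition Mmax :: "real \<Rightarrow> real \<Rightarrow> (real \<times> real \<Rightarrow> real) \<Rightarrow> real" where
  "Mmax R1 R2 mu = (SUP xi \<in> (UNIV :: (real \<times> real) set).
      mass mu (Bint (fst xi) (1 / R1) \<times> Bint (snd xi) (1 / R2)))"

end

theory Submission
  imports Defs
begin

text \<open>
  Write R_i w_i = k_i + h_i with k_i the nearest integer, so |h_i| \<le> 1/2. Expanding exp(i z\<cdot>h)
  into its Taylor series separates the variables: the coefficient of order n is a bilinear form
  \<Sum>_k B_k \<Sum>_z a_z exp(i z\<cdot>k) with integral k in [-R_1,R_1] \<times> [-R_2,R_2], |a_z| \<le> \<mu>(z),
  and |B_k| at most 2^-n times the \<nu>-mass of {w. k(w) = k}. That set has diameter at most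
  1/R_i in coordinate i, so its mass is at most M_\<nu>, whence \<Sum>_k |B_k|^2 \<le> 4^-n M_\<nu> \<nu>(\<real>^2).

  It remains to bound |\<Sum>_k B_k \<Sum>_z a_z exp(i z\<cdot>k)| by e^(\<pi>/4) \<parallel>B\<parallel>_2 (256 R_1 R_2 M_\<mu> \<mu>(\<real>^2))^(1/2).
  This dual large sieve inequality is proved in the same way: round z to the grid
  (2\<pi>/P_1)\<int> \<times> (2\<pi>/P_2)\<int> with P_i = 8\<lceil>R_i\<rceil>, expand the residual phase into its Taylor series,
  and use Cauchy-Schwarz in k and Parseval for the discrete Fourier transform on
  \<int>/P_1 \<times> \<int>/P_2; the grid cells again have diameter at most 1/R_i. The two Taylor series
  cost the factors e and e^(\<pi>/4), so C = 16 e^(1 + \<pi>/4) works.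
\<close>

lemma norm_sum_cis_add_le:
  fixes I :: "'i set" and g :: "'i \<Rightarrow> complex" and a b :: "'i \<Rightarrow> real"
  assumes "finite I" and "\<alpha> \<ge> 0" "\<beta> \<ge> 0"
    and moments: "\<And>n j. j \<le> n \<Longrightarrow>
      cmod (\<Sum>i\<in>I. g i * of_real (a i ^ j * b i ^ (n - j))) \<le> \<alpha> ^ j * \<beta> ^ (n - j) * X"
  shows "cmod (\<Sum>i\<in>I. g i * cis (a i + b i)) \<le> exp (\<alpha> + \<beta>) * X"
proof -
  define T where "T n = (\<i> ^ n / of_real (fact n)) * (\<Sum>i\<in>I. g i * of_real ((a i + b i) ^ n))" for n
  have "(\<lambda>n. \<Sum>i\<in>I. g i * ((\<i> * of_real (a i + b i)) ^ n /\<^sub>R fact n)) sums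
      (\<Sum>i\<in>I. g i * cis (a i + b i))"
    unfolding cis_conv_exp by (intro sums_sum sums_mult exp_converges)
  moreover have "(\<Sum>i\<in>I. g i * ((\<i> * of_real (a i + b i)) ^ n /\<^sub>R fact n)) = T n" for n
    by (simp add: T_def power_mult_distrib scaleR_conv_of_real sum_distrib_left divide_inverse
        mult_ac)
  ultimately have sums_T: "T sums (\<Sum>i\<in>I. g i * cis (a i + b i))"
    by simp
  have binomial_bound: "cmod (\<Sum>i\<in>I. g i * of_real ((a i + b i) ^ n)) \<le> (\<alpha> + \<beta>) ^ n * X" for n
  proof -
    have "(\<Sum>i\<in>I. g i * of_real ((a i + b i) ^ n)) =
        (\<Sum>j\<le>n. of_nat (n choose j) * (\<Sum>i\<in>I. g i * of_real (a i ^ j * b i ^ (n - j))))"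
      by (simp add: binomial_ring sum_distrib_left sum_distrib_right sum.swap[of _ I] mult_ac)
    also have "cmod \<dots> \<le> (\<Sum>j\<le>n. of_nat (n choose j) * (\<alpha> ^ j * \<beta> ^ (n - j) * X))"
      by (rule order.trans[OF norm_sum sum_mono])
        (auto simp only: norm_mult norm_of_nat intro!: mult_left_mono moments)
    also have "\<dots> = (\<alpha> + \<beta>) ^ n * X"
      by (simp add: binomial_ring sum_distrib_left sum_distrib_right mult_ac)
    finally show ?thesis .
  qed
  have norm_T: "norm (T n) \<le> (\<alpha> + \<beta>) ^ n /\<^sub>R fact n * X" for n
    using divide_right_mono[OF binomial_bound[of n], of "fact n"]
    by (simp add: T_def norm_mult norm_divide norm_power divide_simps mult_ac)
  have sums_bound: "(\<lambda>n. (\<alpha> + \<beta>) ^ n /\<^sub>R fact n * X) sums (exp (\<alpha> + \<beta>) * X)"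
    using sums_mult2[OF exp_converges[of "\<alpha> + \<beta>"]] by simp
  have "summable (\<lambda>n. norm (T n))"
    by (rule summable_comparison_test[OF _ sums_summable[OF sums_bound]]) (use norm_T in auto)
  then have "norm (suminf T) \<le> (\<Sum>n. (\<alpha> + \<beta>) ^ n /\<^sub>R fact n * X)"
    by (intro order.trans[OF summable_norm] suminf_le norm_T sums_summable[OF sums_bound])
  then show ?thesis
    using sums_unique[OF sums_T] sums_unique[OF sums_bound] by simp
qed

lemma norm_sum_mult_le_sqrt:
  fixes x y :: "'k \<Rightarrow> complex"
  shows "cmod (\<Sum>k\<in>K. x k * y k) \<le> sqrt (\<Sum>k\<in>K. (cmod (x k))\<^sup>2) * sqrt (\<Sum>k\<in>K. (cmod (y k))\<^sup>2)"
proof -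
  have "cmod (\<Sum>k\<in>K. x k * y k) \<le> (\<Sum>k\<in>K. cmod (x k) * cmod (y k))"
    by (rule order.trans[OF norm_sum]) (simp add: norm_mult)
  also have "\<dots> \<le> sqrt ((\<Sum>k\<in>K. (cmod (x k))\<^sup>2) * (\<Sum>k\<in>K. (cmod (y k))\<^sup>2))"
    using real_sqrt_le_mono[OF Cauchy_Schwarz_ineq_sum, of "\<lambda>k. cmod (x k)" "\<lambda>k. cmod (y k)" K]
    by simp
  finally show ?thesis by (simp add: real_sqrt_mult)
qed

lemma sqrt_sum_norm_sq_scaled_le:
  fixes x :: "'k \<Rightarrow> complex" and c :: "'k \<Rightarrow> real"
  assumes "\<And>k. k \<in> K \<Longrightarrow> \<bar>c k\<bar> \<le> C"
  shows "sqrt (\<Sum>k\<in>K. (cmod (x k * of_real (c k)))\<^sup>2) \<le> C * sqrt (\<Sum>k\<in>K. (cmod (x k))\<^sup>2)"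
proof (cases "K = {}")
  case False
  then have "C \<ge> 0"
    using assms by force
  have "(cmod (x k * of_real (c k)))\<^sup>2 \<le> C\<^sup>2 * (cmod (x k))\<^sup>2" if "k \<in> K" for k
  proof -
    have "\<bar>c k\<bar>\<^sup>2 \<le> C\<^sup>2"
      using assms[OF that] by (intro power_mono) auto
    from mult_right_mono[OF this, of "(cmod (x k))\<^sup>2"] show ?thesis
      by (simp add: norm_mult power_mult_distrib mult.commute)
  qed
  then have "(\<Sum>k\<in>K. (cmod (x k * of_real (c k)))\<^sup>2) \<le> C\<^sup>2 * (\<Sum>k\<in>K. (cmod (x k))\<^sup>2)"
    unfolding sum_distrib_left by (rule sum_mono)
  from real_sqrt_le_mono[OF this] show ?thesis
    using \<open>C \<ge> 0\<close> by (simp add: real_sqrt_mult)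
qed simp

lemma sum_mult_fibres:
  fixes b :: "'a \<Rightarrow> 'c::comm_semiring_1"
  assumes "finite S"
  shows "(\<Sum>z\<in>S. b z * \<phi> (f z)) = (\<Sum>d\<in>f ` S. (\<Sum>z\<in>{z\<in>S. f z = d}. b z) * \<phi> d)"
  unfolding sum.image_gen[OF assms, of "\<lambda>z. b z * \<phi> (f z)" f] sum_distrib_right
  by (intro sum.cong refl) auto

lemma sum_cis_full_period:
  fixes P m a :: int
  assumes "P > 0"
  shows "(\<Sum>c\<in>{a..<a+P}. cis (2 * pi * m * c / P)) = (if P dvd m then of_int P else 0)"
proof (cases "P dvd m")
  case True
  then obtain n where "m = P * n" ..
  then have "cis (2 * pi * m * c / P) = 1" for c :: int
    using assms cis_multiple_2pi[of "of_int (n * c)"] by (simp add: mult_ac)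
  then show ?thesis
    using True assms by simp
next
  case False
  define q where "q = cis (2 * pi * m / P)"
  have q_power: "q ^ j = cis (2 * pi * m * j / P)" for j :: nat
    unfolding q_def Complex.DeMoivre by (simp add: field_simps)
  have "{a..<a+P} = (\<lambda>j. a + int j) ` {..<nat P}"
    by (auto simp: image_iff intro!: bexI[of _ "nat (x - a)" for x])
  then have "(\<Sum>c\<in>{a..<a+P}. cis (2 * pi * m * c / P)) = cis (2 * pi * m * a / P) * (\<Sum>j<nat P. q ^ j)"
    by (simp add: sum.reindex inj_on_def sum_distrib_left q_power cis_mult[symmetric] algebra_simps
        add_divide_distrib)
  moreover have "q ^ nat P = 1"
    using assms by (simp add: q_power cis_multiple_2pi)
  moreover have "q \<noteq> 1"
  proof
    assume "q = 1"
    then obtain n :: int where "2 * pi * m / P = n * 2 * pi"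
      unfolding q_def by (auto simp: complex_eq_iff cos_one_2pi_int)
    then have "real_of_int m = real_of_int (P * n)"
      using assms by (simp add: field_simps)
    then show False
      using False by (simp only: of_int_eq_iff) simp
  qed
  ultimately show ?thesis
    using False by (simp add: geometric_sum)
qed

definition dft_kernel :: "int \<Rightarrow> int \<Rightarrow> int \<times> int \<Rightarrow> int \<times> int \<Rightarrow> complex" where
  "dft_kernel P1 P2 d k = cis (2 * pi * (of_int (fst d) * of_int (fst k) / of_int P1
      + of_int (snd d) * of_int (snd k) / of_int P2))"

lemma sum_dft_kernel_orthogonal:
  assumes "P1 > 0" "P2 > 0"
  shows "(\<Sum>k\<in>{a1..<a1+P1} \<times> {a2..<a2+P2}. dft_kernel P1 P2 d k * cnj (dft_kernel P1 P2 d' k)) =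
    (if P1 dvd (fst d - fst d') \<and> P2 dvd (snd d - snd d') then of_int (P1 * P2) else 0)"
proof -
  have "dft_kernel P1 P2 d k * cnj (dft_kernel P1 P2 d' k) =
      cis (2 * pi * of_int (fst d - fst d') * fst k / P1) *
      cis (2 * pi * of_int (snd d - snd d') * snd k / P2)" for k
    unfolding dft_kernel_def cis_cnj cis_mult
    by (rule arg_cong[where f = cis]) (use assms in \<open>simp add: field_simps\<close>)
  then have "(\<Sum>k\<in>{a1..<a1+P1} \<times> {a2..<a2+P2}. dft_kernel P1 P2 d k * cnj (dft_kernel P1 P2 d' k)) =
      (\<Sum>c\<in>{a1..<a1+P1}. cis (2 * pi * of_int (fst d - fst d') * c / P1)) *
      (\<Sum>c\<in>{a2..<a2+P2}. cis (2 * pi * of_int (snd d - snd d') * c / P2))"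
    by (simp add: sum_product sum.cartesian_product case_prod_beta)
  then show ?thesis
    using assms by (simp only: sum_cis_full_period) simp
qed

lemma parseval_dft_box:
  fixes b :: "int \<times> int \<Rightarrow> complex"
  assumes "P1 > 0" "P2 > 0" and "finite D"
    and distinct_mod: "\<And>d d'. d \<in> D \<Longrightarrow> d' \<in> D \<Longrightarrow> P1 dvd (fst d - fst d') \<Longrightarrow>
      P2 dvd (snd d - snd d') \<Longrightarrow> d = d'"
  shows "(\<Sum>k\<in>{a1..<a1+P1} \<times> {a2..<a2+P2}. (cmod (\<Sum>d\<in>D. b d * dft_kernel P1 P2 d k))\<^sup>2) =
    of_int (P1 * P2) * (\<Sum>d\<in>D. (cmod (b d))\<^sup>2)"
proof -
  let ?B = "{a1..<a1+P1} \<times> {a2..<a2+P2}"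
  have "complex_of_real (\<Sum>k\<in>?B. (cmod (\<Sum>d\<in>D. b d * dft_kernel P1 P2 d k))\<^sup>2) =
      (\<Sum>d\<in>D. \<Sum>d'\<in>D. b d * cnj (b d') *
        (\<Sum>k\<in>?B. dft_kernel P1 P2 d k * cnj (dft_kernel P1 P2 d' k)))"
  proof -
    have "complex_of_real (\<Sum>k\<in>?B. (cmod (\<Sum>d\<in>D. b d * dft_kernel P1 P2 d k))\<^sup>2) =
        (\<Sum>k\<in>?B. \<Sum>d\<in>D. \<Sum>d'\<in>D. b d * cnj (b d') *
          (dft_kernel P1 P2 d k * cnj (dft_kernel P1 P2 d' k)))"
      unfolding of_real_sum complex_norm_square cnj_sum sum_product by (simp add: mult_ac)
    then show ?thesis
      by (simp add: sum_distrib_left sum.swap[of _ ?B])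
  qed
  also have "\<dots> = (\<Sum>d\<in>D. \<Sum>d'\<in>D. if d = d' then b d * cnj (b d') * of_int (P1 * P2) else 0)"
  proof (intro sum.cong refl)
    fix d d' assume "d \<in> D" "d' \<in> D"
    then have "(P1 dvd (fst d - fst d') \<and> P2 dvd (snd d - snd d')) \<longleftrightarrow> d = d'"
      using distinct_mod[of d d'] by auto
    then show "b d * cnj (b d') *
        (\<Sum>k\<in>?B. dft_kernel P1 P2 d k * cnj (dft_kernel P1 P2 d' k)) =
        (if d = d' then b d * cnj (b d') * of_int (P1 * P2) else 0)"
      using assms by (simp add: sum_dft_kernel_orthogonal)
  qed
  also have "\<dots> = (\<Sum>d\<in>D. b d * cnj (b d) * of_int (P1 * P2))"
    using \<open>finite D\<close> by simp
  also have "\<dots> = complex_of_real (of_int (P1 * P2) * (\<Sum>d\<in>D. (cmod (b d))\<^sup>2))"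
    unfolding of_real_mult of_real_sum complex_norm_square by (simp add: sum_distrib_left mult_ac)
  finally show ?thesis
    by (simp only: of_real_eq_iff)
qed

definition grid_index :: "int \<Rightarrow> real \<Rightarrow> int" where
  "grid_index P x = round (x * P / (2 * pi))"

definition grid_offset :: "int \<Rightarrow> real \<Rightarrow> real" where
  "grid_offset P x = x - 2 * pi * grid_index P x / P"

definition grid_point :: "int \<Rightarrow> int \<Rightarrow> real \<times> real \<Rightarrow> int \<times> int" where
  "grid_point P1 P2 z = (grid_index P1 (fst z), grid_index P2 (snd z))"

lemma abs_grid_offset_le:
  assumes "P > 0"
  shows "\<bar>grid_offset P x\<bar> \<le> pi / P"
proof -
  have "grid_offset P x = (2 * pi / P) * (x * P / (2 * pi) - grid_index P x)"
    using assms by (simp add: grid_offset_def field_simps)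
  moreover have "\<bar>x * P / (2 * pi) - grid_index P x\<bar> \<le> 1 / 2"
    unfolding grid_index_def using of_int_round_abs_le by (simp add: abs_minus_commute)
  ultimately show ?thesis
    using assms by (simp add: abs_mult) (simp add: divide_simps)
qed

lemma grid_index_eq_of_dvd:
  assumes "P > 2" "\<bar>x\<bar> \<le> 1" "\<bar>y\<bar> \<le> 1" "P dvd (grid_index P x - grid_index P y)"
  shows "grid_index P x = grid_index P y"
proof (rule ccontr)
  have small: "\<bar>grid_index P t\<bar> \<le> P / 4 + 1 / 2" if "\<bar>t\<bar> \<le> 1" for t
  proof -
    have "\<bar>t * P / (2 * pi)\<bar> \<le> 1 * P / (2 * 2)"
      unfolding abs_divide abs_mult using that assms pi_ge_two by (intro frac_le mult_mono) auto
    then show ?thesis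
      unfolding grid_index_def using of_int_round_abs_le[of "t * P / (2 * pi)"] by linarith
  qed
  assume "grid_index P x \<noteq> grid_index P y"
  then have "\<bar>P\<bar> \<le> \<bar>grid_index P x - grid_index P y\<bar>"
    using dvd_imp_le_int assms(4) by simp
  then show False
    using small[OF assms(2)] small[OF assms(3)] assms(1) by linarith
qed

lemma sum_norm_sq_dft_grid_le:
  fixes b :: "real \<times> real \<Rightarrow> complex"
  assumes "P1 > 2" "P2 > 2" and "finite S" "S \<subseteq> {-1..1} \<times> {-1..1}"
    and "K \<subseteq> {a1..<a1+P1} \<times> {a2..<a2+P2}"
  shows "(\<Sum>k\<in>K. (cmod (\<Sum>z\<in>S. b z * dft_kernel P1 P2 (grid_point P1 P2 z) k))\<^sup>2) \<le>
    of_int (P1 * P2) * (\<Sum>d\<in>grid_point P1 P2 ` S. (cmod (\<Sum>z\<in>{z\<in>S. grid_point P1 P2 z = d}. b z))\<^sup>2)"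
proof -
  let ?G = "grid_point P1 P2"
  have distinct_mod: "d = d'"
    if "d \<in> ?G ` S" "d' \<in> ?G ` S" "P1 dvd (fst d - fst d')" "P2 dvd (snd d - snd d')" for d d'
    using that assms(1,2,4) grid_index_eq_of_dvd
    by (fastforce simp: grid_point_def subset_iff abs_le_iff)
  have "(\<Sum>k\<in>K. (cmod (\<Sum>z\<in>S. b z * dft_kernel P1 P2 (?G z) k))\<^sup>2) \<le>
      (\<Sum>k\<in>{a1..<a1+P1} \<times> {a2..<a2+P2}. (cmod (\<Sum>z\<in>S. b z * dft_kernel P1 P2 (?G z) k))\<^sup>2)"
    using assms(5) by (intro sum_mono2) auto
  also have "\<dots> = of_int (P1 * P2) * (\<Sum>d\<in>?G ` S. (cmod (\<Sum>z\<in>{z\<in>S. ?G z = d}. b z))\<^sup>2)"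
    unfolding sum_mult_fibres[OF \<open>finite S\<close>, of b "\<lambda>d. dft_kernel P1 P2 d _" ?G]
    using assms(1-3) distinct_mod by (intro parseval_dft_box) auto
  finally show ?thesis .
qed

lemma fs_measure_finite: "fs_measure_on_square mu \<Longrightarrow> finite (fsupp mu)"
  by (simp add: fs_measure_on_square_def)

lemma fs_measure_nonneg: "fs_measure_on_square mu \<Longrightarrow> mu z \<ge> 0"
  unfolding fs_measure_on_square_def by blast

lemma fs_measure_supp_square: "fs_measure_on_square mu \<Longrightarrow> fsupp mu \<subseteq> {-1..1} \<times> {-1..1}"
  by (simp add: fs_measure_on_square_def)

lemma fs_measure_supp_abs_le:
  assumes "fs_measure_on_square mu" "z \<in> fsupp mu"
  shows "\<bar>fst z\<bar> \<le> 1" "\<bar>snd z\<bar> \<le> 1"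
  using assms by (cases z, force simp: fs_measure_on_square_def abs_le_iff)+

lemma fs_measure_total_nonneg: "fs_measure_on_square mu \<Longrightarrow> sum mu (fsupp mu) \<ge> 0"
  by (simp add: fs_measure_nonneg sum_nonneg)

lemma mass_le_Mmax:
  assumes "fs_measure_on_square mu"
  shows "mass mu (Bint x (1 / R1) \<times> Bint y (1 / R2)) \<le> Mmax R1 R2 mu"
proof -
  have "mass mu A \<le> sum mu (fsupp mu)" for A
    unfolding mass_def using assms
    by (intro sum_mono2) (auto simp: fs_measure_finite fs_measure_nonneg)
  then have "mass mu (Bint (fst (x, y)) (1 / R1) \<times> Bint (snd (x, y)) (1 / R2)) \<le> Mmax R1 R2 mu"
    unfolding Mmax_def by (intro cSUP_upper bdd_aboveI2) auto
  then show ?thesis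
    by simp
qed

lemma Mmax_nonneg:
  assumes "fs_measure_on_square mu"
  shows "Mmax R1 R2 mu \<ge> 0"
  using mass_le_Mmax[OF assms, of 0 R1 0 R2] fs_measure_nonneg[OF assms]
  unfolding mass_def by (meson order.trans sum_nonneg)

lemma fibre_mass_le_Mmax:
  assumes mu: "fs_measure_on_square mu"
    and fibre: "\<And>z z'. z \<in> fsupp mu \<Longrightarrow> z' \<in> fsupp mu \<Longrightarrow> f z = f z' \<Longrightarrow>
      \<bar>fst z' - fst z\<bar> \<le> 1 / R1 \<and> \<bar>snd z' - snd z\<bar> \<le> 1 / R2"
    and "z0 \<in> fsupp mu"
  shows "(\<Sum>z\<in>{z\<in>fsupp mu. f z = f z0}. mu z) \<le> Mmax R1 R2 mu"
proof -
  have "z \<in> Bint (fst z0) (1 / R1) \<times> Bint (snd z0) (1 / R2)" if "z \<in> fsupp mu" "f z = f z0" for z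
    using fibre[OF \<open>z0 \<in> fsupp mu\<close> that(1)] that(2) by (auto simp: Bint_def mem_Times_iff abs_le_iff)
  then have "(\<Sum>z\<in>{z\<in>fsupp mu. f z = f z0}. mu z) \<le>
      mass mu (Bint (fst z0) (1 / R1) \<times> Bint (snd z0) (1 / R2))"
    unfolding mass_def using mu by (intro sum_mono2) (auto simp: fs_measure_finite fs_measure_nonneg)
  then show ?thesis
    using mass_le_Mmax[OF mu] by (rule order.trans)
qed

lemma sum_norm_sq_fibre_sums_le:
  fixes b :: "real \<times> real \<Rightarrow> complex" and f :: "real \<times> real \<Rightarrow> 'd"
  assumes mu: "fs_measure_on_square mu"
    and b: "\<And>z. z \<in> fsupp mu \<Longrightarrow> cmod (b z) \<le> \<rho> * mu z"
    and fibre: "\<And>z z'. z \<in> fsupp mu \<Longrightarrow> z' \<in> fsupp mu \<Longrightarrow> f z = f z' \<Longrightarrow>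
      \<bar>fst z' - fst z\<bar> \<le> 1 / R1 \<and> \<bar>snd z' - snd z\<bar> \<le> 1 / R2"
  shows "(\<Sum>d\<in>f ` fsupp mu. (cmod (\<Sum>z\<in>{z\<in>fsupp mu. f z = d}. b z))\<^sup>2) \<le>
    \<rho>\<^sup>2 * (Mmax R1 R2 mu * sum mu (fsupp mu))"
proof -
  define m where "m d = (\<Sum>z\<in>{z\<in>fsupp mu. f z = d}. mu z)" for d
  have m_le: "m d \<le> Mmax R1 R2 mu" if "d \<in> f ` fsupp mu" for d
    using that fibre_mass_le_Mmax[OF mu fibre] unfolding m_def by blast
  have b_le: "cmod (\<Sum>z\<in>{z\<in>fsupp mu. f z = d}. b z) \<le> \<rho> * m d" for d
    unfolding m_def sum_distrib_left by (rule order.trans[OF norm_sum sum_mono]) (auto intro: b)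
  have "(cmod (\<Sum>z\<in>{z\<in>fsupp mu. f z = d}. b z))\<^sup>2 \<le> \<rho>\<^sup>2 * (Mmax R1 R2 mu * m d)"
    if "d \<in> f ` fsupp mu" for d
  proof -
    have "(cmod (\<Sum>z\<in>{z\<in>fsupp mu. f z = d}. b z))\<^sup>2 \<le> (\<rho> * m d)\<^sup>2"
      using b_le[of d] by (intro power_mono) auto
    also have "\<dots> = \<rho>\<^sup>2 * (m d * m d)"
      by (simp add: power2_eq_square)
    also have "\<dots> \<le> \<rho>\<^sup>2 * (Mmax R1 R2 mu * m d)"
      using m_le[OF that] mu
      by (intro mult_left_mono mult_right_mono) (auto simp: m_def sum_nonneg fs_measure_nonneg)
    finally show ?thesis .
  qed
  then have "(\<Sum>d\<in>f ` fsupp mu. (cmod (\<Sum>z\<in>{z\<in>fsupp mu. f z = d}. b z))\<^sup>2) \<le>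
      (\<Sum>d\<in>f ` fsupp mu. \<rho>\<^sup>2 * (Mmax R1 R2 mu * m d))"
    by (rule sum_mono)
  also have "\<dots> = \<rho>\<^sup>2 * (Mmax R1 R2 mu * sum mu (fsupp mu))"
    unfolding m_def sum_distrib_left[symmetric] sum.image_gen[OF fs_measure_finite[OF mu], symmetric]
    by (rule refl)
  finally show ?thesis .
qed

lemma sum_norm_sq_dft_grid_measure_le:
  fixes b :: "real \<times> real \<Rightarrow> complex"
  assumes P: "P1 > 2" "P2 > 2" "2 * pi * R1 \<le> P1" "2 * pi * R2 \<le> P2" and R: "R1 > 0" "R2 > 0"
    and mu: "fs_measure_on_square mu" and b: "\<And>z. z \<in> fsupp mu \<Longrightarrow> cmod (b z) \<le> \<rho> * mu z"
    and K: "K \<subseteq> {a1..<a1+P1} \<times> {a2..<a2+P2}"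
  shows "(\<Sum>k\<in>K. (cmod (\<Sum>z\<in>fsupp mu. b z * dft_kernel P1 P2 (grid_point P1 P2 z) k))\<^sup>2) \<le>
    of_int (P1 * P2) * (\<rho>\<^sup>2 * (Mmax R1 R2 mu * sum mu (fsupp mu)))"
proof -
  have close: "\<bar>t' - t\<bar> \<le> 1 / R"
    if "grid_index P t = grid_index P t'" "P > 0" "2 * pi * R \<le> P" "R > 0" for t t' R and P :: int
  proof -
    have "\<bar>t' - t\<bar> \<le> 2 * pi / P"
      using abs_grid_offset_le[of P t] abs_grid_offset_le[of P t'] that
      by (auto simp: grid_offset_def)
    also have "\<dots> \<le> 1 / R"
      using that by (simp add: field_simps)
    finally show ?thesis .
  qed
  have fibre: "\<bar>fst z' - fst z\<bar> \<le> 1 / R1 \<and> \<bar>snd z' - snd z\<bar> \<le> 1 / R2"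
    if "grid_point P1 P2 z = grid_point P1 P2 z'" for z z'
    using close[of P1 "fst z" "fst z'" R1] close[of P2 "snd z" "snd z'" R2] that P R
    by (simp add: grid_point_def)
  have "(\<Sum>k\<in>K. (cmod (\<Sum>z\<in>fsupp mu. b z * dft_kernel P1 P2 (grid_point P1 P2 z) k))\<^sup>2) \<le>
      of_int (P1 * P2) * (\<Sum>d\<in>grid_point P1 P2 ` fsupp mu.
        (cmod (\<Sum>z\<in>{z\<in>fsupp mu. grid_point P1 P2 z = d}. b z))\<^sup>2)"
    using P(1,2) fs_measure_finite[OF mu] fs_measure_supp_square[OF mu] K
    by (rule sum_norm_sq_dft_grid_le)
  also have "\<dots> \<le> of_int (P1 * P2) * (\<rho>\<^sup>2 * (Mmax R1 R2 mu * sum mu (fsupp mu)))"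
    using P(1,2) by (intro mult_left_mono sum_norm_sq_fibre_sums_le[OF mu b fibre]) auto
  finally show ?thesis .
qed

lemma grid_moment_bound:
  fixes x :: "int \<times> int \<Rightarrow> complex" and a :: "real \<times> real \<Rightarrow> complex"
    and K :: "(int \<times> int) set" and M1 M2 :: real
  assumes P: "P1 > 2" "P2 > 2" "2 * pi * R1 \<le> P1" "2 * pi * R2 \<le> P2" and R: "R1 > 0" "R2 > 0"
    and mu: "fs_measure_on_square mu" and a: "\<And>z. z \<in> fsupp mu \<Longrightarrow> cmod (a z) \<le> mu z"
    and K: "K \<subseteq> {c1..<c1+P1} \<times> {c2..<c2+P2}"
      "\<And>k. k \<in> K \<Longrightarrow> \<bar>real_of_int (fst k)\<bar> \<le> M1 \<and> \<bar>real_of_int (snd k)\<bar> \<le> M2"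
  shows "cmod (\<Sum>(k, z)\<in>K \<times> fsupp mu. x k * a z * dft_kernel P1 P2 (grid_point P1 P2 z) k *
      of_real ((grid_offset P1 (fst z) * real_of_int (fst k)) ^ j *
        (grid_offset P2 (snd z) * real_of_int (snd k)) ^ (n - j)))
    \<le> (M1 * (pi / P1)) ^ j * (M2 * (pi / P2)) ^ (n - j) *
      (sqrt (\<Sum>k\<in>K. (cmod (x k))\<^sup>2) * sqrt (of_int (P1 * P2) * (Mmax R1 R2 mu * sum mu (fsupp mu))))"
proof -
  define c where "c k = real_of_int (fst k) ^ j * real_of_int (snd k) ^ (n - j)" for k :: "int \<times> int"
  define b where "b z = a z * of_real (grid_offset P1 (fst z) ^ j * grid_offset P2 (snd z) ^ (n - j))"
    for z
  define \<rho> where "\<rho> = (pi / P1) ^ j * (pi / P2) ^ (n - j)"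
  have "\<bar>c k\<bar> \<le> M1 ^ j * M2 ^ (n - j)" if "k \<in> K" for k
    using K(2)[OF that] unfolding c_def abs_mult power_abs by (intro mult_mono power_mono) auto
  then have x_part: "sqrt (\<Sum>k\<in>K. (cmod (x k * of_real (c k)))\<^sup>2) \<le>
      M1 ^ j * M2 ^ (n - j) * sqrt (\<Sum>k\<in>K. (cmod (x k))\<^sup>2)"
    by (rule sqrt_sum_norm_sq_scaled_le)
  have "cmod (b z) \<le> \<rho> * mu z" if "z \<in> fsupp mu" for z
  proof -
    have "\<bar>grid_offset P1 (fst z) ^ j * grid_offset P2 (snd z) ^ (n - j)\<bar> \<le> \<rho>"
      unfolding \<rho>_def abs_mult power_abs
      using abs_grid_offset_le P by (intro mult_mono power_mono) auto
    then show ?thesis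
      unfolding b_def norm_mult norm_of_real using a[OF that]
      by (subst mult.commute) (intro mult_mono; simp)
  qed
  from real_sqrt_le_mono[OF sum_norm_sq_dft_grid_measure_le[OF P R mu this K(1)]]
  have F_part: "sqrt (\<Sum>k\<in>K. (cmod (\<Sum>z\<in>fsupp mu. b z * dft_kernel P1 P2 (grid_point P1 P2 z) k))\<^sup>2)
      \<le> \<rho> * sqrt (of_int (P1 * P2) * (Mmax R1 R2 mu * sum mu (fsupp mu)))"
    using P by (simp add: \<rho>_def real_sqrt_mult mult_ac)
  have "(\<Sum>(k, z)\<in>K \<times> fsupp mu. x k * a z * dft_kernel P1 P2 (grid_point P1 P2 z) k *
      of_real ((grid_offset P1 (fst z) * real_of_int (fst k)) ^ j *
        (grid_offset P2 (snd z) * real_of_int (snd k)) ^ (n - j))) =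
      (\<Sum>k\<in>K. (x k * of_real (c k)) * (\<Sum>z\<in>fsupp mu. b z * dft_kernel P1 P2 (grid_point P1 P2 z) k))"
    unfolding sum.cartesian_product[symmetric]
    by (simp add: c_def b_def sum_distrib_left power_mult_distrib mult_ac)
  also have "cmod \<dots> \<le> (M1 ^ j * M2 ^ (n - j) * sqrt (\<Sum>k\<in>K. (cmod (x k))\<^sup>2)) *
      (\<rho> * sqrt (of_int (P1 * P2) * (Mmax R1 R2 mu * sum mu (fsupp mu))))"
    using x_part F_part
    by (intro order.trans[OF norm_sum_mult_le_sqrt mult_mono']) (auto intro!: sum_nonneg)
  also have "\<dots> = (M1 * (pi / P1)) ^ j * (M2 * (pi / P2)) ^ (n - j) *
      (sqrt (\<Sum>k\<in>K. (cmod (x k))\<^sup>2) * sqrt (of_int (P1 * P2) * (Mmax R1 R2 mu * sum mu (fsupp mu))))"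
    unfolding \<rho>_def power_mult_distrib by (simp add: mult_ac)
  finally show ?thesis .
qed

lemma dual_large_sieve_grid:
  fixes x :: "int \<times> int \<Rightarrow> complex" and a :: "real \<times> real \<Rightarrow> complex"
    and K :: "(int \<times> int) set" and M1 M2 :: real
  assumes P: "P1 > 2" "P2 > 2" "2 * pi * R1 \<le> P1" "2 * pi * R2 \<le> P2" and R: "R1 > 0" "R2 > 0"
    and mu: "fs_measure_on_square mu" and a: "\<And>z. z \<in> fsupp mu \<Longrightarrow> cmod (a z) \<le> mu z"
    and K: "finite K" "K \<subseteq> {c1..<c1+P1} \<times> {c2..<c2+P2}"
      "\<And>k. k \<in> K \<Longrightarrow> \<bar>real_of_int (fst k)\<bar> \<le> M1 \<and> \<bar>real_of_int (snd k)\<bar> \<le> M2"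
    and M: "M1 \<ge> 0" "M2 \<ge> 0"
  shows "cmod (\<Sum>k\<in>K. \<Sum>z\<in>fsupp mu. x k * a z * cis (fst z * fst k + snd z * snd k)) \<le>
    exp (M1 * (pi / P1) + M2 * (pi / P2)) *
      (sqrt (\<Sum>k\<in>K. (cmod (x k))\<^sup>2) * sqrt (of_int (P1 * P2) * (Mmax R1 R2 mu * sum mu (fsupp mu))))"
proof -
  have "cis (fst z * fst k + snd z * snd k) = dft_kernel P1 P2 (grid_point P1 P2 z) k *
      cis (grid_offset P1 (fst z) * fst k + grid_offset P2 (snd z) * snd k)"
    for z :: "real \<times> real" and k :: "int \<times> int"
    unfolding dft_kernel_def grid_point_def grid_offset_def cis_mult
    by (rule arg_cong[where f = cis]) (use P in \<open>simp add: field_simps\<close>)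
  then have "(\<Sum>k\<in>K. \<Sum>z\<in>fsupp mu. x k * a z * cis (fst z * fst k + snd z * snd k)) =
      (\<Sum>(k, z)\<in>K \<times> fsupp mu. x k * a z * dft_kernel P1 P2 (grid_point P1 P2 z) k *
        cis (grid_offset P1 (fst z) * fst k + grid_offset P2 (snd z) * snd k))"
    by (simp add: sum.cartesian_product mult_ac)
  then show ?thesis
    using norm_sum_cis_add_le[where
        g = "\<lambda>(k, z). x k * a z * dft_kernel P1 P2 (grid_point P1 P2 z) k"
        and a = "\<lambda>(k, z). grid_offset P1 (fst z) * fst k"
        and b = "\<lambda>(k, z). grid_offset P2 (snd z) * snd k" and I = "K \<times> fsupp mu" and \<alpha> = "M1 * (pi / P1)" and \<beta> = "M2 * (pi / P2)"]
      grid_moment_bound[OF P R mu a K(2,3)] K(1) fs_measure_finite[OF mu] M P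
    by (simp add: case_prod_beta)
qed

lemma dual_large_sieve_square:
  fixes x :: "int \<times> int \<Rightarrow> complex" and a :: "real \<times> real \<Rightarrow> complex"
  assumes R: "R1 \<ge> 1" "R2 \<ge> 1" and mu: "fs_measure_on_square mu"
    and a: "\<And>z. z \<in> fsupp mu \<Longrightarrow> cmod (a z) \<le> mu z"
    and K: "finite K" "\<And>k. k \<in> K \<Longrightarrow> \<bar>fst k\<bar> \<le> \<lceil>R1\<rceil> \<and> \<bar>snd k\<bar> \<le> \<lceil>R2\<rceil>"
  shows "cmod (\<Sum>k\<in>K. \<Sum>z\<in>fsupp mu. x k * a z * cis (fst z * fst k + snd z * snd k)) \<le>
    exp (pi / 4) * sqrt (\<Sum>k\<in>K. (cmod (x k))\<^sup>2) *
      sqrt (256 * (R1 * R2) * (Mmax R1 R2 mu * sum mu (fsupp mu)))"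
proof -
  \<comment> \<open>The mesh 2\<pi>/P is at most 1/R, one period contains [-M, M], and M \<pi>/P = \<pi>/8.\<close>
  define M1 where "M1 = \<lceil>R1\<rceil>"
  define M2 where "M2 = \<lceil>R2\<rceil>"
  define P1 where "P1 = 8 * M1"
  define P2 where "P2 = 8 * M2"
  have M: "R1 \<le> M1" "M1 \<le> 2 * R1" "R2 \<le> M2" "M2 \<le> 2 * R2"
    using R unfolding M1_def M2_def by linarith+
  have "R1 * pi \<le> R1 * 4" "R2 * pi \<le> R2 * 4"
    using R pi_less_4 by (intro mult_left_mono; simp)+
  then have P: "P1 > 2" "P2 > 2" "2 * pi * R1 \<le> P1" "2 * pi * R2 \<le> P2"
    using M R unfolding P1_def P2_def by (auto, linarith+)
  have box: "K \<subseteq> {-M1..<-M1+P1} \<times> {-M2..<-M2+P2}"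
    using K(2) M R unfolding P1_def P2_def M1_def[symmetric] M2_def[symmetric]
    by (force simp: abs_le_iff)
  have range: "\<bar>real_of_int (fst k)\<bar> \<le> M1 \<and> \<bar>real_of_int (snd k)\<bar> \<le> M2" if "k \<in> K" for k
    using K(2)[OF that] unfolding M1_def M2_def by linarith
  have mesh: "M1 * (pi / P1) + M2 * (pi / P2) = pi / 4"
    using P by (simp add: P1_def P2_def)
  have "real_of_int (P1 * P2) \<le> 256 * (R1 * R2)"
    using M mult_mono[OF M(2) M(4)] R unfolding P1_def P2_def by simp
  then have P_le: "sqrt (of_int (P1 * P2) * (Mmax R1 R2 mu * sum mu (fsupp mu))) \<le>
      sqrt (256 * (R1 * R2) * (Mmax R1 R2 mu * sum mu (fsupp mu)))"
    using Mmax_nonneg[OF mu] fs_measure_total_nonneg[OF mu]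
    by (intro real_sqrt_le_mono mult_right_mono) auto
  have "cmod (\<Sum>k\<in>K. \<Sum>z\<in>fsupp mu. x k * a z * cis (fst z * fst k + snd z * snd k)) \<le>
      exp (pi / 4) * (sqrt (\<Sum>k\<in>K. (cmod (x k))\<^sup>2) *
        sqrt (of_int (P1 * P2) * (Mmax R1 R2 mu * sum mu (fsupp mu))))"
    using dual_large_sieve_grid[OF P _ _ mu a K(1) box range] M R unfolding mesh by simp
  also have "\<dots> \<le> exp (pi / 4) * (sqrt (\<Sum>k\<in>K. (cmod (x k))\<^sup>2) *
      sqrt (256 * (R1 * R2) * (Mmax R1 R2 mu * sum mu (fsupp mu))))"
    using P_le by (intro mult_left_mono) (auto intro!: sum_nonneg)
  finally show ?thesis
    by (simp only: mult.assoc)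
qed

lemma abs_round_le_ceiling:
  fixes x R :: real
  assumes "\<bar>x\<bar> \<le> R"
  shows "\<bar>round x\<bar> \<le> \<lceil>R\<rceil>"
  using assms of_int_round_abs_le[of x] le_of_int_ceiling[of R] by linarith

definition lattice_round :: "real \<Rightarrow> real \<Rightarrow> real \<times> real \<Rightarrow> int \<times> int" where
  "lattice_round R1 R2 w = (round (R1 * fst w), round (R2 * snd w))"

lemma lattice_round_abs_le_ceiling:
  assumes "R1 \<ge> 0" "R2 \<ge> 0" "fs_measure_on_square nu" "d \<in> lattice_round R1 R2 ` fsupp nu"
  shows "\<bar>fst d\<bar> \<le> \<lceil>R1\<rceil> \<and> \<bar>snd d\<bar> \<le> \<lceil>R2\<rceil>"
proof -
  obtain w where w: "w \<in> fsupp nu" "d = lattice_round R1 R2 w"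
    using assms(4) by blast
  have "\<bar>R1 * fst w\<bar> \<le> R1" "\<bar>R2 * snd w\<bar> \<le> R2"
    using assms(1,2) fs_measure_supp_abs_le[OF assms(3) w(1)]
    by (auto simp: abs_mult intro: mult_left_le)
  then show ?thesis
    unfolding w lattice_round_def by (simp add: abs_round_le_ceiling)
qed

lemma lattice_round_eq_imp_close:
  assumes "R1 > 0" "R2 > 0" "lattice_round R1 R2 w = lattice_round R1 R2 w'"
  shows "\<bar>fst w' - fst w\<bar> \<le> 1 / R1 \<and> \<bar>snd w' - snd w\<bar> \<le> 1 / R2"
proof -
  have "real_of_int (round (R1 * fst w)) = round (R1 * fst w')"
    "real_of_int (round (R2 * snd w)) = round (R2 * snd w')"
    using assms(3) by (simp_all add: lattice_round_def)
  then have "\<bar>R1 * fst w' - R1 * fst w\<bar> \<le> 1" "\<bar>R2 * snd w' - R2 * snd w\<bar> \<le> 1"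
    using of_int_round_abs_le[of "R1 * fst w"] of_int_round_abs_le[of "R1 * fst w'"]
      of_int_round_abs_le[of "R2 * snd w"] of_int_round_abs_le[of "R2 * snd w'"]
    by linarith+
  then show ?thesis
    using assms by (simp add: right_diff_distrib[symmetric] abs_mult pos_le_divide_eq mult.commute)
qed

lemma sqrt_sum_norm_sq_lattice_weights_le:
  assumes R: "R1 > 0" "R2 > 0" and nu: "fs_measure_on_square nu"
  defines "k \<equiv> lattice_round R1 R2"
  shows "sqrt (\<Sum>d\<in>k ` fsupp nu. (cmod (\<Sum>w\<in>{w\<in>fsupp nu. k w = d}.
      complex_of_real (nu w * ((R1 * fst w - fst (k w)) ^ j * (R2 * snd w - snd (k w)) ^ (n - j)))))\<^sup>2)
    \<le> (1 / 2) ^ j * (1 / 2) ^ (n - j) * sqrt (Mmax R1 R2 nu * sum nu (fsupp nu))"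
proof -
  define \<rho> :: real where "\<rho> = (1 / 2) ^ j * (1 / 2) ^ (n - j)"
  have "cmod (complex_of_real (nu w * ((R1 * fst w - fst (k w)) ^ j * (R2 * snd w - snd (k w)) ^ (n - j))))
      \<le> \<rho> * nu w" for w
  proof -
    have "\<bar>(R1 * fst w - fst (k w)) ^ j * (R2 * snd w - snd (k w)) ^ (n - j)\<bar> \<le> \<rho>"
      unfolding \<rho>_def abs_mult power_abs k_def lattice_round_def
      using of_int_round_abs_le by (intro mult_mono power_mono) (auto simp: abs_minus_commute)
    from mult_left_mono[OF this fs_measure_nonneg[OF nu, of w]] show ?thesis
      unfolding norm_of_real abs_mult using fs_measure_nonneg[OF nu, of w] by (simp add: mult.commute)
  qed
  moreover have "\<bar>fst w' - fst w\<bar> \<le> 1 / R1 \<and> \<bar>snd w' - snd w\<bar> \<le> 1 / R2" if "k w = k w'" for w w'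
    using lattice_round_eq_imp_close[OF R] that unfolding k_def .
  ultimately have "(\<Sum>d\<in>k ` fsupp nu. (cmod (\<Sum>w\<in>{w\<in>fsupp nu. k w = d}.
      complex_of_real (nu w * ((R1 * fst w - fst (k w)) ^ j * (R2 * snd w - snd (k w)) ^ (n - j)))))\<^sup>2)
    \<le> \<rho>\<^sup>2 * (Mmax R1 R2 nu * sum nu (fsupp nu))"
    by (intro sum_norm_sq_fibre_sums_le[OF nu])
  from real_sqrt_le_mono[OF this] show ?thesis
    by (simp add: \<rho>_def real_sqrt_mult)
qed

lemma rounded_moment_bound:
  assumes R: "R1 \<ge> 1" "R2 \<ge> 1" and mu: "fs_measure_on_square mu" and nu: "fs_measure_on_square nu"
  defines "k \<equiv> lattice_round R1 R2"
  shows "cmod (\<Sum>(z, w)\<in>fsupp mu \<times> fsupp nu. of_real (mu z * nu w) *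
      cis (fst z * fst (k w) + snd z * snd (k w)) *
      of_real ((fst z * (R1 * fst w - fst (k w))) ^ j * (snd z * (R2 * snd w - snd (k w))) ^ (n - j)))
    \<le> (1 / 2) ^ j * (1 / 2) ^ (n - j) * (exp (pi / 4) * sqrt (Mmax R1 R2 nu * sum nu (fsupp nu)) *
      sqrt (256 * (R1 * R2) * (Mmax R1 R2 mu * sum mu (fsupp mu))))"
proof -
  define a where "a z = complex_of_real (mu z * (fst z ^ j * snd z ^ (n - j)))" for z :: "real \<times> real"
  define c where "c w = complex_of_real
    (nu w * ((R1 * fst w - fst (k w)) ^ j * (R2 * snd w - snd (k w)) ^ (n - j)))" for w
  define B where "B d = (\<Sum>w\<in>{w\<in>fsupp nu. k w = d}. c w)" for d
  have a_le: "cmod (a z) \<le> mu z" if "z \<in> fsupp mu" for z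
  proof -
    have "\<bar>fst z ^ j * snd z ^ (n - j)\<bar> \<le> 1"
      using fs_measure_supp_abs_le[OF mu that] unfolding abs_mult power_abs
      by (intro mult_le_one power_le_one) auto
    then show ?thesis
      unfolding a_def norm_of_real abs_mult using fs_measure_nonneg[OF mu, of z]
      by (simp add: mult_left_le)
  qed
  have "(\<Sum>(z, w)\<in>fsupp mu \<times> fsupp nu. of_real (mu z * nu w) *
      cis (fst z * fst (k w) + snd z * snd (k w)) *
      of_real ((fst z * (R1 * fst w - fst (k w))) ^ j * (snd z * (R2 * snd w - snd (k w))) ^ (n - j))) =
      (\<Sum>w\<in>fsupp nu. c w * (\<Sum>z\<in>fsupp mu. a z * cis (fst z * fst (k w) + snd z * snd (k w))))"
    unfolding sum.cartesian_product[symmetric]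
    by (subst sum.swap) (simp add: a_def c_def sum_distrib_left power_mult_distrib mult_ac)
  also have "\<dots> = (\<Sum>d\<in>k ` fsupp nu. B d * (\<Sum>z\<in>fsupp mu. a z * cis (fst z * fst d + snd z * snd d)))"
    unfolding B_def using fs_measure_finite[OF nu] by (rule sum_mult_fibres)
  also have "\<dots> = (\<Sum>d\<in>k ` fsupp nu. \<Sum>z\<in>fsupp mu. B d * a z * cis (fst z * fst d + snd z * snd d))"
    by (simp add: sum_distrib_left mult_ac)
  also have "cmod \<dots> \<le> exp (pi / 4) * sqrt (\<Sum>d\<in>k ` fsupp nu. (cmod (B d))\<^sup>2) *
      sqrt (256 * (R1 * R2) * (Mmax R1 R2 mu * sum mu (fsupp mu)))"
    using fs_measure_finite[OF nu] R unfolding k_def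
    by (intro dual_large_sieve_square[OF R mu a_le] lattice_round_abs_le_ceiling[OF _ _ nu]) auto
  also have "\<dots> \<le> exp (pi / 4) *
      ((1 / 2) ^ j * (1 / 2) ^ (n - j) * sqrt (Mmax R1 R2 nu * sum nu (fsupp nu))) * sqrt (256 * (R1 * R2) * (Mmax R1 R2 mu * sum mu (fsupp mu)))"
    using sqrt_sum_norm_sq_lattice_weights_le[OF _ _ nu, of R1 R2 j n] R
      Mmax_nonneg[OF mu] fs_measure_total_nonneg[OF mu]
    unfolding B_def c_def k_def by (intro mult_right_mono mult_left_mono) auto
  finally show ?thesis
    by (simp add: mult_ac)
qed

lemma norm_bilinear_cis_sum_le:
  assumes R: "R1 \<ge> 1" "R2 \<ge> 1" and mu: "fs_measure_on_square mu" and nu: "fs_measure_on_square nu"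
  shows "cmod (\<Sum>z\<in>fsupp mu. \<Sum>w\<in>fsupp nu.
        cis (R1 * fst z * fst w + R2 * snd z * snd w) * complex_of_real (mu z * nu w))
    \<le> 16 * exp (1 + pi / 4) * sqrt (R1 * R2) * sqrt (\<Sum>z\<in>fsupp mu. mu z) * sqrt (\<Sum>w\<in>fsupp nu. nu w)
        * sqrt (Mmax R1 R2 mu) * sqrt (Mmax R1 R2 nu)"
proof -
  define k where "k = lattice_round R1 R2"
  define X where "X = exp (pi / 4) * sqrt (Mmax R1 R2 nu * sum nu (fsupp nu)) *
    sqrt (256 * (R1 * R2) * (Mmax R1 R2 mu * sum mu (fsupp mu)))"
  have phase: "cis (R1 * fst z * fst w + R2 * snd z * snd w) =
      cis (fst z * fst (k w) + snd z * snd (k w)) *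
      cis (fst z * (R1 * fst w - fst (k w)) + snd z * (R2 * snd w - snd (k w)))" for z w
    unfolding cis_mult by (simp add: algebra_simps)
  have "cmod (\<Sum>z\<in>fsupp mu. \<Sum>w\<in>fsupp nu.
        cis (R1 * fst z * fst w + R2 * snd z * snd w) * complex_of_real (mu z * nu w)) =
      cmod (\<Sum>(z, w)\<in>fsupp mu \<times> fsupp nu. of_real (mu z * nu w) *
        cis (fst z * fst (k w) + snd z * snd (k w)) *
        cis (fst z * (R1 * fst w - fst (k w)) + snd z * (R2 * snd w - snd (k w))))"
    unfolding phase by (simp add: sum.cartesian_product mult_ac)
  also have "\<dots> \<le> exp (1 / 2 + 1 / 2) * X"
    using norm_sum_cis_add_le[where
        g = "\<lambda>(z, w). of_real (mu z * nu w) * cis (fst z * fst (k w) + snd z * snd (k w))"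
        and a = "\<lambda>(z, w). fst z * (R1 * fst w - fst (k w))"
        and b = "\<lambda>(z, w). snd z * (R2 * snd w - snd (k w))" and I = "fsupp mu \<times> fsupp nu" and \<alpha> = "1 / 2" and \<beta> = "1 / 2" and X = X]
      rounded_moment_bound[OF R mu nu] fs_measure_finite[OF mu] fs_measure_finite[OF nu]
    by (simp add: k_def X_def case_prod_beta)
  also have "\<dots> = 16 * exp (1 + pi / 4) * sqrt (R1 * R2) * sqrt (\<Sum>z\<in>fsupp mu. mu z) *
      sqrt (\<Sum>w\<in>fsupp nu. nu w) * sqrt (Mmax R1 R2 mu) * sqrt (Mmax R1 R2 nu)"
    by (simp add: X_def real_sqrt_mult exp_add mult_ac)
  finally show ?thesis .
qed

theorem lemma6p1:
  shows "\<exists>C::real. \<forall>R1 R2 :: real. \<forall>mu nu.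
    R1 \<ge> 1 \<longrightarrow> R2 \<ge> 1 \<longrightarrow> fs_measure_on_square mu \<longrightarrow> fs_measure_on_square nu \<longrightarrow>
    cmod (\<Sum>z\<in>fsupp mu. \<Sum>w\<in>fsupp nu.
        cis (R1 * fst z * fst w + R2 * snd z * snd w) * complex_of_real (mu z * nu w))
    \<le> C * sqrt (R1 * R2) * sqrt (\<Sum>z\<in>fsupp mu. mu z) * sqrt (\<Sum>w\<in>fsupp nu. nu w)
        * sqrt (Mmax R1 R2 mu) * sqrt (Mmax R1 R2 nu)"
  using norm_bilinear_cis_sum_le by blast

end
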